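(* Consider group testing with $p$ items, $k=\Theta(p^\theta)$ defectives ($\theta\in(0,1)$), i.i.d. Bernoulli testing with parameter $\nu>0$, and reverse $Z$-channel noise with parameter $\rho\in(0,1)$. Call a non-defective item $j$ an intruding possible defective if it appears in no negative test, and for such $j$ let $N_j$ be the number of false positive tests (tests containing no defective item whose outcome is positive) that contain $j$. Fix $\gamma>0$ and $\Phi>\rho$, and let $c=\Phi\nu e^{-\nu}\gamma\log p$ and $n=\gamma k\log p$. If $\gamma\nu e^{-\nu}(D_\rho(\Phi)+1-\rho)<1$, then with probability tending to one as $p\to\infty$ there exists an intruding possible defective (non-defective) item $j$ with $N_j>c$.
   Context: Setup: unknown defective set $S$ uniform among size-$k$ subsets of $\{1,\dots,p\}$, $p\to\infty$. Test matrix $\mathbf X\in\{0,1\}^{n\times p}$ with i.i.d. Bernoulli$(\nu/k)$ entries ($X_{ij}=1$ iff item $j$ is in test $i$). Noiseless outcome $U_i=\bigvee_{j\in S}X_{ij}$; observed $Y_i$ obtained independently via the reverse $Z$-channel: $P(Y=1|U=0)=\rho$, $P(Y=0|U=0)=1-\rho$, $P(Y=1|U=1)=1$. A test is negative if $Y_i=0$, positive if $Y_i=1$. Natural logarithms. $D_\gamma(t)=t\log(t/\gamma)-t+\gamma$ for $\gamma>0$, $t\ge0$. *)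

theory Defs
  imports "HOL-Probability.Probability" "HOL-Library.Landau_Symbols"
begin

definition Dfun :: "real \<Rightarrow> real \<Rightarrow> real" where
  "Dfun g t = t * ln (t / g) - t + g"

text \<open>Items are 1..p, tests are 0..<n.  A sample is (S, X, Y): defective set S,
  test matrix X (X (i,j) iff item j in test i), observed outcomes Y.\<close>

definition noiseless_outcome :: "nat set \<Rightarrow> (nat \<times> nat \<Rightarrow> bool) \<Rightarrow> nat \<Rightarrow> bool" where
  "noiseless_outcome S X i = (\<exists>j\<in>S. X (i, j))"

definition gt_pmf :: "nat \<Rightarrow> nat \<Rightarrow> nat \<Rightarrow> real \<Rightarrow> real \<Rightarrow>
    (nat set \<times> (nat \<times> nat \<Rightarrow> bool) \<times> (nat \<Rightarrow> bool)) pmf" where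
  "gt_pmf p k n \<nu> \<rho> =
     bind_pmf (pmf_of_set {S. S \<subseteq> {1..p} \<and> card S = k}) (\<lambda>S.
     bind_pmf (Pi_pmf ({0..<n} \<times> {1..p}) False (\<lambda>_. bernoulli_pmf (\<nu> / real k))) (\<lambda>X.
     bind_pmf (Pi_pmf {0..<n} False (\<lambda>_. bernoulli_pmf \<rho>)) (\<lambda>Z.
     return_pmf (S, X, (\<lambda>i. noiseless_outcome S X i \<or> Z i)))))"

definition intruding_possible_defective ::
    "nat \<Rightarrow> nat \<Rightarrow> nat set \<Rightarrow> (nat \<times> nat \<Rightarrow> bool) \<Rightarrow> (nat \<Rightarrow> bool) \<Rightarrow> nat \<Rightarrow> bool" where
  "intruding_possible_defective p n S X Y j =
     (j \<in> {1..p} \<and> j \<notin> S \<and> (\<forall>i<n. X (i, j) \<longrightarrow> Y i))"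

definition N_fp :: "nat \<Rightarrow> nat set \<Rightarrow> (nat \<times> nat \<Rightarrow> bool) \<Rightarrow> (nat \<Rightarrow> bool) \<Rightarrow> nat \<Rightarrow> nat" where
  "N_fp n S X Y j = card {i. i < n \<and> X (i, j) \<and> \<not> noiseless_outcome S X i \<and> Y i}"

end

(*
  A test without defectives is positive with probability rho.  The number of such tests is
  Binomial(n, pi) with pi = (1 - nu/k)^k -> exp(-nu), so by Hoeffding it lies between
  n pi (1 - delta) and n pi (1 + delta), and at least a fraction rho (1 - delta) of them are
  false positives.  Conditionally on the columns of the defectives and on the noise, the
  p - k columns of the non-defectives are independent, and each of them avoids every negative
  test while meeting more than c false positives with probability at least
  (lo choose r) q^r (1 - q)^hi, where q = nu/k, r is about c and lo, hi are the bounds above.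
  Stirling's bound on the binomial coefficient shows that p - k times this probability grows
  like p^kappa up to logarithmic factors, where kappa > 0 is the hypothesis
  gamma nu exp(-nu) (D_rho(Phi) + 1 - rho) < 1 after perturbing all thresholds by a small
  delta.  Hence an intruder with more than c false positives is missing only with probability
  exp(-(p - k) (lo choose r) q^r (1 - q)^hi) + o(1) -> 0.
*)

theory Submission
  imports Defs "HOL-Real_Asymp.Real_Asymp"
begin

section \<open>Independent Bernoulli arrays\<close>

lemma measure_pmf_prob_pair_Times:
  "measure_pmf.prob (pair_pmf M N) (A \<times> B) = measure_pmf.prob M A * measure_pmf.prob N B"
proof -
  have "measure_pmf.prob (pair_pmf M N) (A \<times> B)
      = measure_pmf.prob (pair_pmf M N) ((A \<inter> set_pmf M) \<times> (B \<inter> set_pmf N))"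
    by (intro measure_prob_cong_0) (auto simp: pmf_pair set_pmf_iff)
  also have "\<dots> = measure_pmf.prob M (A \<inter> set_pmf M) * measure_pmf.prob N (B \<inter> set_pmf N)"
    by (intro measure_pmf_prob_product) auto
  finally show ?thesis
    by (simp add: measure_Int_set_pmf)
qed

lemma measure_pmf_prob_Pi_pmf_UN:
  fixes B :: "'j \<Rightarrow> 'a set" and Q :: "'j \<Rightarrow> ('a \<Rightarrow> 'b) \<Rightarrow> bool"
  assumes "finite J" and fin: "\<And>j. j \<in> J \<Longrightarrow> finite (B j)"
    and disj: "disjoint_family_on B J"
    and local: "\<And>j f g. j \<in> J \<Longrightarrow> (\<And>x. x \<in> B j \<Longrightarrow> f x = g x) \<Longrightarrow> Q j f = Q j g"
  shows "measure_pmf.prob (Pi_pmf (\<Union>j\<in>J. B j) d p) {f. \<forall>j\<in>J. Q j f}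
         = (\<Prod>j\<in>J. measure_pmf.prob (Pi_pmf (B j) d p) {f. Q j f})"
proof -
  have "measure_pmf.prob (Pi_pmf (\<Union>j\<in>J'. B j) d p) {f. \<forall>j\<in>J'. Q j f}
         = (\<Prod>j\<in>J'. measure_pmf.prob (Pi_pmf (B j) d p) {f. Q j f})" if "finite J'" "J' \<subseteq> J" for J'
    using that
  proof (induction J' rule: finite_induct)
    case empty
    show ?case by simp
  next
    case (insert j J')
    define U where "U = (\<Union>j\<in>J'. B j)"
    define merge :: "('a \<Rightarrow> 'b) \<times> ('a \<Rightarrow> 'b) \<Rightarrow> 'a \<Rightarrow> 'b"
      where "merge = (\<lambda>(f, g) x. if x \<in> B j then f x else g x)"
    have j: "j \<in> J" and J': "J' \<subseteq> J" using insert.prems by auto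
    have disjU: "B j \<inter> U = {}"
      using disj insert.hyps(2) j J' by (fastforce simp: U_def disjoint_family_on_def)
    have "Q j (merge (f, g)) = Q j f" for f g
      by (rule local[OF j]) (simp add: merge_def)
    moreover have "Q i (merge (f, g)) = Q i g" if "i \<in> J'" for i f g
      using that J' disjU by (intro local) (auto simp: merge_def U_def)
    ultimately have pre: "merge -` {f. \<forall>i\<in>insert j J'. Q i f} = {f. Q j f} \<times> {g. \<forall>i\<in>J'. Q i g}"
      by auto
    have "Pi_pmf (\<Union>i\<in>insert j J'. B i) d p = map_pmf merge (pair_pmf (Pi_pmf (B j) d p) (Pi_pmf U d p))"
      unfolding merge_def using insert.hyps fin j J' disjU
      by (simp add: U_def Pi_pmf_union[symmetric] subset_eq)
    then have "measure_pmf.prob (Pi_pmf (\<Union>i\<in>insert j J'. B i) d p) {f. \<forall>i\<in>insert j J'. Q i f}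
        = measure_pmf.prob (Pi_pmf (B j) d p) {f. Q j f} * measure_pmf.prob (Pi_pmf U d p) {g. \<forall>i\<in>J'. Q i g}"
      by (simp only: measure_map_pmf pre measure_pmf_prob_pair_Times)
    then show ?case
      using insert J' by (simp add: U_def)
  qed
  then show ?thesis
    using \<open>finite J\<close> by blast
qed

lemma measure_Pi_pmf_bernoulli_pattern:
  assumes "finite D" "D' \<subseteq> D" "A \<subseteq> D'" "0 \<le> q" "q \<le> 1"
  shows "measure_pmf.prob (Pi_pmf D False (\<lambda>_. bernoulli_pmf q)) {f. \<forall>x\<in>D'. f x = (x \<in> A)}
         = q ^ card A * (1 - q) ^ card (D' - A)"
proof -
  define V where "V x = (if x \<in> A then {True} else if x \<in> D' then {False} else UNIV)" for x
  define g where "g x = (if x \<in> A then q else if x \<in> D' then 1 - q else 1)" for x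
  have fin: "finite D'" "finite A"
    using assms(1-3) by (auto intro: finite_subset)
  have "{f. \<forall>x\<in>D'. f x = (x \<in> A)} = Pi D V"
    using assms(2,3) by (auto simp: V_def Pi_def)
  then have "measure_pmf.prob (Pi_pmf D False (\<lambda>_. bernoulli_pmf q)) {f. \<forall>x\<in>D'. f x = (x \<in> A)}
      = (\<Prod>x\<in>D. measure_pmf.prob (bernoulli_pmf q) (V x))"
    by (simp only: measure_Pi_pmf_Pi[OF assms(1)])
  also have "\<dots> = (\<Prod>x\<in>D. g x)"
    using assms(4,5) by (intro prod.cong refl) (simp add: V_def g_def measure_pmf_single)
  also have "\<dots> = (\<Prod>x\<in>D'. g x)"
    using assms(1,2,3) by (intro prod.mono_neutral_right) (auto simp: g_def)
  also have "\<dots> = (\<Prod>x\<in>A. g x) * (\<Prod>x\<in>D' - A. g x)"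
    using fin assms(3) prod.union_disjoint[of A "D' - A" g] by (simp add: Un_absorb1)
  also have "\<dots> = q ^ card A * (1 - q) ^ card (D' - A)"
    by (simp add: g_def)
  finally show ?thesis .
qed


lemma measure_Pi_pmf_bernoulli_count:
  assumes "finite D" "D0 \<subseteq> D" "D1 \<subseteq> D" "D0 \<inter> D1 = {}" "0 \<le> q" "q \<le> 1"
  shows "measure_pmf.prob (Pi_pmf D False (\<lambda>_. bernoulli_pmf q))
           {f. (\<forall>x\<in>D0. \<not> f x) \<and> card {x\<in>D1. f x} = r}
         = real (card D1 choose r) * q ^ r * (1 - q) ^ (card D0 + card D1 - r)"
proof -
  let ?P = "Pi_pmf D False (\<lambda>_. bernoulli_pmf q)"
  define \<A> where "\<A> = {A. A \<subseteq> D1 \<and> card A = r}"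
  define pattern where "pattern A = {f. \<forall>x\<in>D0 \<union> D1. f x = (x \<in> A)}" for A
  have fin: "finite D0" "finite D1"
    using assms(1-3) by (auto intro: finite_subset)
  have "{f. (\<forall>x\<in>D0. \<not> f x) \<and> card {x\<in>D1. f x} = r} = (\<Union>A\<in>\<A>. pattern A)"
  proof (intro equalityI subsetI)
    fix f assume "f \<in> {f. (\<forall>x\<in>D0. \<not> f x) \<and> card {x\<in>D1. f x} = r}"
    then have "{x\<in>D1. f x} \<in> \<A>" "f \<in> pattern {x\<in>D1. f x}"
      using assms(4) by (auto simp: \<A>_def pattern_def)
    then show "f \<in> (\<Union>A\<in>\<A>. pattern A)"
      by blast
  next
    fix f assume "f \<in> (\<Union>A\<in>\<A>. pattern A)"
    then obtain A where "A \<subseteq> D1" "card A = r" "\<forall>x\<in>D0 \<union> D1. f x = (x \<in> A)"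
      by (auto simp: \<A>_def pattern_def)
    moreover from this have "{x\<in>D1. f x} = A"
      by auto
    ultimately show "f \<in> {f. (\<forall>x\<in>D0. \<not> f x) \<and> card {x\<in>D1. f x} = r}"
      using assms(4) by auto
  qed
  moreover have "disjoint_family_on pattern \<A>"
    unfolding disjoint_family_on_def
  proof (intro ballI impI)
    fix A A' assume "A \<in> \<A>" "A' \<in> \<A>" "A \<noteq> A'"
    moreover obtain x where "(x \<in> A) \<noteq> (x \<in> A')"
      using \<open>A \<noteq> A'\<close> by blast
    ultimately show "pattern A \<inter> pattern A' = {}"
      by (auto simp: \<A>_def pattern_def)
  qed
  ultimately have "measure_pmf.prob ?P {f. (\<forall>x\<in>D0. \<not> f x) \<and> card {x\<in>D1. f x} = r}
      = (\<Sum>A\<in>\<A>. measure_pmf.prob ?P (pattern A))"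
    using fin by (simp add: measure_pmf.finite_measure_finite_Union \<A>_def)
  also have "\<dots> = (\<Sum>A\<in>\<A>. q ^ r * (1 - q) ^ (card D0 + card D1 - r))"
  proof (rule sum.cong)
    fix A assume "A \<in> \<A>"
    then have A: "A \<subseteq> D0 \<union> D1" "card A = r"
      by (auto simp: \<A>_def)
    then have "card (D0 \<union> D1 - A) = card (D0 \<union> D1) - r"
      using fin card_Diff_subset[of A "D0 \<union> D1"] finite_subset[OF A(1)] by simp
    also have "card (D0 \<union> D1) = card D0 + card D1"
      using fin assms(4) by (simp add: card_Un_disjoint)
    finally have "card (D0 \<union> D1 - A) = card D0 + card D1 - r" .
    then show "measure_pmf.prob ?P (pattern A) = q ^ r * (1 - q) ^ (card D0 + card D1 - r)"
      using \<open>A \<in> \<A>\<close> assms unfolding pattern_def \<A>_def by (subst measure_Pi_pmf_bernoulli_pattern) auto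
  qed simp
  also have "\<dots> = real (card D1 choose r) * q ^ r * (1 - q) ^ (card D0 + card D1 - r)"
    using n_subsets[OF fin(2), of r] by (simp add: \<A>_def)
  finally show ?thesis .
qed

lemma measure_Pi_pmf_bernoulli_hits_ge:
  assumes "finite D" "D0 \<subseteq> D" "D1 \<subseteq> D" "D0 \<inter> D1 = {}" "0 \<le> q" "q \<le> 1"
  shows "real (card D1 choose r) * q ^ r * (1 - q) ^ (card D0 + card D1)
         \<le> measure_pmf.prob (Pi_pmf D False (\<lambda>_. bernoulli_pmf q))
              {f. (\<forall>x\<in>D0. \<not> f x) \<and> r \<le> card {x\<in>D1. f x}}"
proof -
  have "(1 - q) ^ (card D0 + card D1) \<le> (1 - q) ^ (card D0 + card D1 - r)"
    using assms(5,6) by (intro power_decreasing) auto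
  then have "real (card D1 choose r) * q ^ r * (1 - q) ^ (card D0 + card D1)
      \<le> measure_pmf.prob (Pi_pmf D False (\<lambda>_. bernoulli_pmf q)) {f. (\<forall>x\<in>D0. \<not> f x) \<and> card {x\<in>D1. f x} = r}"
    using assms by (simp add: measure_Pi_pmf_bernoulli_count mult_left_mono)
  also have "\<dots> \<le> measure_pmf.prob (Pi_pmf D False (\<lambda>_. bernoulli_pmf q))
      {f. (\<forall>x\<in>D0. \<not> f x) \<and> r \<le> card {x\<in>D1. f x}}"
    by (intro measure_pmf.finite_measure_mono) auto
  finally show ?thesis .
qed

lemma map_pmf_rows_avoiding:
  fixes T :: "'a set" and S :: "'b set"
  assumes "finite T" "finite S" "0 \<le> q" "q \<le> 1"
  shows "map_pmf (\<lambda>X i. i \<in> T \<and> (\<forall>j\<in>S. \<not> X (i, j))) (Pi_pmf (T \<times> S) False (\<lambda>_. bernoulli_pmf q))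
       = Pi_pmf T False (\<lambda>_. bernoulli_pmf ((1 - q) ^ card S))"
proof (rule pmf_eqI)
  fix w :: "'a \<Rightarrow> bool"
  let ?P = "\<lambda>A. Pi_pmf A False (\<lambda>_. bernoulli_pmf q)"
  let ?rows = "\<lambda>X i. i \<in> T \<and> (\<forall>j\<in>S. \<not> X (i, j))"
  have \<pi>: "0 \<le> (1 - q) ^ card S" "(1 - q) ^ card S \<le> 1"
    using assms(3,4) by (auto intro: power_le_one)
  have row: "measure_pmf.prob (?P ({i} \<times> S)) {X. (\<forall>j\<in>S. \<not> X (i, j)) = b}
      = pmf (bernoulli_pmf ((1 - q) ^ card S)) b" for i b
  proof -
    have "{X. \<forall>j\<in>S. \<not> X (i, j)} = Pi ({i} \<times> S) (\<lambda>_. {False})"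
      by (auto simp: Pi_def)
    then have avoid: "measure_pmf.prob (?P ({i} \<times> S)) {X. \<forall>j\<in>S. \<not> X (i, j)} = (1 - q) ^ card S"
      using assms by (simp add: measure_Pi_pmf_Pi measure_pmf_single card_cartesian_product)
    show ?thesis
    proof (cases b)
      case False
      have "{X. (\<forall>j\<in>S. \<not> X (i, j)) = b} = UNIV - {X. \<forall>j\<in>S. \<not> X (i, j)}"
        using False by auto
      then show ?thesis
        using avoid \<pi> False measure_pmf.prob_compl[of "{X. \<forall>j\<in>S. \<not> X (i, j)}" "?P ({i} \<times> S)"]
        by simp
    qed (use avoid \<pi> in simp)
  qed
  show "pmf (map_pmf ?rows (?P (T \<times> S))) w = pmf (Pi_pmf T False (\<lambda>_. bernoulli_pmf ((1 - q) ^ card S))) w"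
  proof (cases "\<exists>x. x \<notin> T \<and> w x")
    case True
    then have "?rows -` {w} = {}"
      by auto
    then show ?thesis
      using True by (simp add: pmf_map pmf_Pi_outside[OF assms(1)])
  next
    case False
    then have "?rows X = w \<longleftrightarrow> (\<forall>i\<in>T. (\<forall>j\<in>S. \<not> X (i, j)) = w i)" for X
      by (auto simp: fun_eq_iff)
    then have "?rows -` {w} = {X. \<forall>i\<in>T. (\<forall>j\<in>S. \<not> X (i, j)) = w i}"
      by auto
    then have "pmf (map_pmf ?rows (?P (T \<times> S))) w
        = measure_pmf.prob (?P (\<Union>i\<in>T. {i} \<times> S)) {X. \<forall>i\<in>T. (\<forall>j\<in>S. \<not> X (i, j)) = w i}"
      by (simp add: pmf_map Sigma_def)
    also have "\<dots> = (\<Prod>i\<in>T. measure_pmf.prob (?P ({i} \<times> S)) {X. (\<forall>j\<in>S. \<not> X (i, j)) = w i})"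
      by (rule measure_pmf_prob_Pi_pmf_UN) (use assms in \<open>auto simp: disjoint_family_on_def\<close>)
    also have "\<dots> = pmf (Pi_pmf T False (\<lambda>_. bernoulli_pmf ((1 - q) ^ card S))) w"
      using False assms(1) by (subst pmf_Pi') (auto simp: row)
    finally show ?thesis .
  qed
qed

lemma measure_Pi_pmf_card_eq_binomial:
  assumes "finite T" "A \<subseteq> T" "0 \<le> \<rho>" "\<rho> \<le> 1"
  shows "measure_pmf.prob (Pi_pmf T False (\<lambda>_. bernoulli_pmf \<rho>)) {Z. P (card {i\<in>A. Z i})}
       = measure_pmf.prob (binomial_pmf (card A) \<rho>) {x. P x}"
proof -
  have "finite A"
    using assms(1,2) by (rule finite_subset[rotated])
  then have "binomial_pmf (card A) \<rho> = map_pmf (\<lambda>f. card {x\<in>A. f x}) (Pi_pmf A False (\<lambda>_. bernoulli_pmf \<rho>))"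
    using assms by (intro binomial_pmf_altdef') auto
  also have "\<dots> = map_pmf (\<lambda>f. card {x\<in>A. f x}) (Pi_pmf T False (\<lambda>_. bernoulli_pmf \<rho>))"
    using assms by (subst Pi_pmf_subset[of T A]) (auto simp: pmf.map_comp o_def cong: conj_cong)
  finally show ?thesis
    by simp
qed

lemma measure_Pi_pmf_column_hits_ge:
  fixes T N0 N1 :: "'a set" and j :: 'b
  assumes "finite T" "N0 \<subseteq> T" "N1 \<subseteq> T" "N0 \<inter> N1 = {}" "0 \<le> q" "q \<le> 1"
  shows "real (card N1 choose r) * q ^ r * (1 - q) ^ (card N0 + card N1)
         \<le> measure_pmf.prob (Pi_pmf (T \<times> {j}) False (\<lambda>_. bernoulli_pmf q))
              {X. (\<forall>i\<in>N0. \<not> X (i, j)) \<and> r \<le> card {i\<in>N1. X (i, j)}}"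
proof -
  have "card {i\<in>N1. X (i, j)} = card {x\<in>N1 \<times> {j}. X x}" for X
    by (rule bij_betw_same_card[of "\<lambda>i. (i, j)"]) (auto simp: bij_betw_def inj_on_def)
  then have "{X. (\<forall>i\<in>N0. \<not> X (i, j)) \<and> r \<le> card {i\<in>N1. X (i, j)}}
      = {X. (\<forall>x\<in>N0 \<times> {j}. \<not> X x) \<and> r \<le> card {x\<in>N1 \<times> {j}. X x}}"
    by auto
  moreover have "real (card N1 choose r) * q ^ r * (1 - q) ^ (card N0 + card N1)
      \<le> measure_pmf.prob (Pi_pmf (T \<times> {j}) False (\<lambda>_. bernoulli_pmf q))
          {X. (\<forall>x\<in>N0 \<times> {j}. \<not> X x) \<and> r \<le> card {x\<in>N1 \<times> {j}. X x}}"
    using measure_Pi_pmf_bernoulli_hits_ge[of "T \<times> {j}" "N0 \<times> {j}" "N1 \<times> {j}" q r] assms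
    by (auto simp: card_cartesian_product)
  ultimately show ?thesis
    by simp
qed

lemma measure_Pi_pmf_exists_good_column:
  fixes T N0 N1 :: "'a set" and J :: "'b set"
  assumes "finite T" "finite J" "N0 \<subseteq> T" "N1 \<subseteq> T" "N0 \<inter> N1 = {}" "0 \<le> q" "q \<le> 1"
  shows "1 - exp (- real (card J) * (real (card N1 choose r) * q ^ r * (1 - q) ^ (card N0 + card N1)))
         \<le> measure_pmf.prob (Pi_pmf (T \<times> J) False (\<lambda>_. bernoulli_pmf q))
              {X. \<exists>j\<in>J. (\<forall>i\<in>N0. \<not> X (i, j)) \<and> r \<le> card {i\<in>N1. X (i, j)}}"
proof -
  let ?P = "\<lambda>D. Pi_pmf D False (\<lambda>_. bernoulli_pmf q)"
  define h where "h = real (card N1 choose r) * q ^ r * (1 - q) ^ (card N0 + card N1)"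
  define good where "good j X \<longleftrightarrow> (\<forall>i\<in>N0. \<not> X (i, j)) \<and> r \<le> card {i\<in>N1. X (i, j)}"
    for j and X :: "'a \<times> 'b \<Rightarrow> bool"
  have good_col: "h \<le> measure_pmf.prob (?P (T \<times> {j})) {X. good j X}" for j
    unfolding h_def good_def using assms by (intro measure_Pi_pmf_column_hits_ge) auto
  have bad_col: "measure_pmf.prob (?P (T \<times> {j})) {X. \<not> good j X} \<le> 1 - h" for j
    using good_col[of j] measure_pmf.prob_compl[of "{X. good j X}" "?P (T \<times> {j})"]
    by (simp add: Collect_neg_eq Compl_eq_Diff_UNIV)
  have "h \<le> 1"
    using good_col[of undefined] measure_pmf.prob_le_1[of "?P (T \<times> {undefined})"] by (rule order_trans)
  have "measure_pmf.prob (?P (\<Union>j\<in>J. T \<times> {j})) {X. \<forall>j\<in>J. \<not> good j X}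
      = (\<Prod>j\<in>J. measure_pmf.prob (?P (T \<times> {j})) {X. \<not> good j X})"
  proof (rule measure_pmf_prob_Pi_pmf_UN)
    fix j and X Y :: "'a \<times> 'b \<Rightarrow> bool"
    assume "\<And>x. x \<in> T \<times> {j} \<Longrightarrow> X x = Y x"
    then have "\<forall>i\<in>T. X (i, j) = Y (i, j)"
      by simp
    then have "{i\<in>N1. X (i, j)} = {i\<in>N1. Y (i, j)}" "\<forall>i\<in>N0. X (i, j) = Y (i, j)"
      using assms(3,4) by auto
    then show "(\<not> good j X) = (\<not> good j Y)"
      by (simp add: good_def)
  qed (use assms in \<open>auto simp: disjoint_family_on_def\<close>)
  also have "\<dots> \<le> (\<Prod>j\<in>J. 1 - h)"
    using bad_col by (intro prod_mono) auto
  also have "\<dots> = (1 - h) ^ card J"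
    by simp
  also have "\<dots> \<le> exp (- h) ^ card J"
    using \<open>h \<le> 1\<close> exp_ge_add_one_self[of "- h"] by (intro power_mono) auto
  also have "\<dots> = exp (- real (card J) * h)"
    by (simp add: exp_of_nat_mult[symmetric])
  also have "(\<Union>j\<in>J. T \<times> {j}) = T \<times> J"
    by auto
  finally have "measure_pmf.prob (?P (T \<times> J)) {X. \<forall>j\<in>J. \<not> good j X} \<le> exp (- real (card J) * h)" .
  moreover have "{X. \<exists>j\<in>J. good j X} = UNIV - {X. \<forall>j\<in>J. \<not> good j X}"
    by auto
  ultimately have "1 - exp (- real (card J) * h) \<le> measure_pmf.prob (?P (T \<times> J)) {X. \<exists>j\<in>J. good j X}"
    using measure_pmf.prob_compl[of "{X. \<forall>j\<in>J. \<not> good j X}" "?P (T \<times> J)"] by simp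
  then show ?thesis
    by (simp add: h_def good_def)
qed

section \<open>The testing model\<close>

lemma measure_pmf_prob_bind:
  "measure_pmf.prob (bind_pmf M f) A = measure_pmf.expectation M (\<lambda>x. measure_pmf.prob (f x) A)"
proof -
  have "ennreal (measure_pmf.prob (bind_pmf M f) A) = emeasure (bind_pmf M f) A"
    by (simp add: measure_pmf.emeasure_eq_measure)
  also have "\<dots> = (\<integral>\<^sup>+x. emeasure (f x) A \<partial>M)"
    by simp
  also have "\<dots> = (\<integral>\<^sup>+x. ennreal (measure_pmf.prob (f x) A) \<partial>M)"
    by (simp add: measure_pmf.emeasure_eq_measure)
  also have "\<dots> = ennreal (measure_pmf.expectation M (\<lambda>x. measure_pmf.prob (f x) A))"
    by (intro nn_integral_eq_integral measure_pmf.integrable_const_bound[where B=1]) auto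
  finally show ?thesis
    by (simp add: integral_nonneg_AE)
qed

lemma measure_pmf_prob_bind_ge:
  assumes "a \<le> 1" and good: "\<And>x. x \<in> set_pmf M \<Longrightarrow> x \<notin> B \<Longrightarrow> a \<le> measure_pmf.prob (f x) A"
  shows "a - measure_pmf.prob M B \<le> measure_pmf.prob (bind_pmf M f) A"
proof -
  have int: "integrable M (\<lambda>x. a - indicator B x :: real)"
    by (intro measure_pmf.integrable_const_bound[where B="\<bar>a\<bar> + 1"]) (auto split: split_indicator)
  have "integrable M (indicator B :: _ \<Rightarrow> real)"
    by (rule measure_pmf.integrable_const_bound[where B=1]) (auto split: split_indicator)
  then have "measure_pmf.expectation M (\<lambda>x. a - indicator B x) = a - measure_pmf.prob M B"
    by (subst Bochner_Integration.integral_diff) (auto simp: measure_pmf.prob_space)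
  then have "a - measure_pmf.prob M B = measure_pmf.expectation M (\<lambda>x. a - indicator B x)"
    by simp
  also have "\<dots> \<le> measure_pmf.expectation M (\<lambda>x. measure_pmf.prob (f x) A)"
  proof (rule integral_mono_AE[OF int])
    show "integrable M (\<lambda>x. measure_pmf.prob (f x) A)"
      by (rule measure_pmf.integrable_const_bound[where B=1]) auto
    show "AE x in M. a - indicator B x \<le> measure_pmf.prob (f x) A"
    proof (rule AE_pmfI)
      fix x assume "x \<in> set_pmf M"
      then show "a - indicator B x \<le> measure_pmf.prob (f x) A"
        using good[of x] assms(1) by (cases "x \<in> B") (auto intro: order_trans[OF _ measure_nonneg])
    qed
  qed
  finally show ?thesis
    by (simp add: measure_pmf_prob_bind)
qed

definition intruder_event :: "nat \<Rightarrow> nat \<Rightarrow> real \<Rightarrow> (nat set \<times> (nat \<times> nat \<Rightarrow> bool) \<times> (nat \<Rightarrow> bool)) set"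
  where "intruder_event p n c =
    {(S, X, Y). \<exists>j. intruding_possible_defective p n S X Y j \<and> real (N_fp n S X Y j) > c}"

definition observe :: "nat set \<Rightarrow> (nat \<times> nat \<Rightarrow> bool) \<Rightarrow> (nat \<Rightarrow> bool)
    \<Rightarrow> nat set \<times> (nat \<times> nat \<Rightarrow> bool) \<times> (nat \<Rightarrow> bool)"
  where "observe S X Z = (S, X, (\<lambda>i. noiseless_outcome S X i \<or> Z i))"

definition tests_pmf :: "nat \<Rightarrow> nat \<Rightarrow> real \<Rightarrow> real \<Rightarrow> nat set
    \<Rightarrow> (nat set \<times> (nat \<times> nat \<Rightarrow> bool) \<times> (nat \<Rightarrow> bool)) pmf"
  where "tests_pmf p n q \<rho> S =
    bind_pmf (Pi_pmf ({0..<n} \<times> {1..p}) False (\<lambda>_. bernoulli_pmf q)) (\<lambda>X.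
    map_pmf (observe S X) (Pi_pmf {0..<n} False (\<lambda>_. bernoulli_pmf \<rho>)))"

lemma gt_pmf_conv_tests_pmf:
  "gt_pmf p k n \<nu> \<rho> = bind_pmf (pmf_of_set {S. S \<subseteq> {1..p} \<and> card S = k}) (tests_pmf p n (\<nu> / real k) \<rho>)"
  by (simp add: gt_pmf_def tests_pmf_def[abs_def] observe_def map_pmf_def)

lemma observe_in_intruder_event:
  assumes "j \<in> {1..p}" "j \<notin> S" "c < real r"
    and "\<And>i. i < n \<Longrightarrow> \<not> noiseless_outcome S X i \<Longrightarrow> \<not> Z i \<Longrightarrow> \<not> X (i, j)"
    and "r \<le> card {i. i < n \<and> \<not> noiseless_outcome S X i \<and> Z i \<and> X (i, j)}"
  shows "observe S X Z \<in> intruder_event p n c"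
proof -
  let ?Y = "\<lambda>i. noiseless_outcome S X i \<or> Z i"
  have "intruding_possible_defective p n S X ?Y j"
    using assms(1,2,4) by (auto simp: intruding_possible_defective_def)
  moreover have "{i. i < n \<and> X (i, j) \<and> \<not> noiseless_outcome S X i \<and> ?Y i}
      = {i. i < n \<and> \<not> noiseless_outcome S X i \<and> Z i \<and> X (i, j)}"
    by auto
  then have "c < real (N_fp n S X ?Y j)"
    using assms(3,5) by (simp add: N_fp_def)
  ultimately show ?thesis
    by (auto simp: intruder_event_def observe_def)
qed

lemma tests_pmf_split:
  assumes "S \<subseteq> {1..p}"
  shows "tests_pmf p n q \<rho> S =
    bind_pmf (Pi_pmf ({0..<n} \<times> S) False (\<lambda>_. bernoulli_pmf q)) (\<lambda>X1.
    bind_pmf (Pi_pmf {0..<n} False (\<lambda>_. bernoulli_pmf \<rho>)) (\<lambda>Z.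
    map_pmf (\<lambda>X2. observe S (\<lambda>x. if x \<in> {0..<n} \<times> S then X1 x else X2 x) Z)
      (Pi_pmf ({0..<n} \<times> ({1..p} - S)) False (\<lambda>_. bernoulli_pmf q))))"
proof -
  let ?P = "\<lambda>D. Pi_pmf D False (\<lambda>_. bernoulli_pmf q)"
  let ?PZ = "Pi_pmf {0..<n} False (\<lambda>_. bernoulli_pmf \<rho>)"
  let ?merge = "\<lambda>X1 X2 x. if x \<in> {0..<n} \<times> S then X1 x else X2 x"
  have "finite S"
    using assms by (rule finite_subset) simp
  moreover have "{0..<n} \<times> {1..p} = {0..<n} \<times> S \<union> {0..<n} \<times> ({1..p} - S)"
    using assms by auto
  ultimately have "?P ({0..<n} \<times> {1..p})
      = map_pmf (\<lambda>(X1, X2). ?merge X1 X2) (pair_pmf (?P ({0..<n} \<times> S)) (?P ({0..<n} \<times> ({1..p} - S))))"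
    by (simp only:) (rule Pi_pmf_union; auto)
  then have "tests_pmf p n q \<rho> S = bind_pmf (map_pmf (\<lambda>(X1, X2). ?merge X1 X2)
      (pair_pmf (?P ({0..<n} \<times> S)) (?P ({0..<n} \<times> ({1..p} - S))))) (\<lambda>X. map_pmf (observe S X) ?PZ)"
    by (simp only: tests_pmf_def)
  also have "\<dots> = bind_pmf (?P ({0..<n} \<times> S)) (\<lambda>X1. bind_pmf (?P ({0..<n} \<times> ({1..p} - S)))
      (\<lambda>X2. map_pmf (observe S (?merge X1 X2)) ?PZ))"
    by (simp add: bind_map_pmf pair_pmf_def bind_assoc_pmf bind_return_pmf)
  also have "\<dots> = bind_pmf (?P ({0..<n} \<times> S)) (\<lambda>X1. bind_pmf ?PZ (\<lambda>Z.
      bind_pmf (?P ({0..<n} \<times> ({1..p} - S))) (\<lambda>X2. return_pmf (observe S (?merge X1 X2) Z))))"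
    unfolding map_pmf_def by (subst bind_commute_pmf) (rule refl)
  finally show ?thesis
    by (simp only: map_pmf_def)
qed

lemma measure_intruder_given_defective_columns_noise:
  fixes n :: nat and X1 :: "nat \<times> nat \<Rightarrow> bool" and Z :: "nat \<Rightarrow> bool"
  assumes "S \<subseteq> {1..p}" "0 \<le> q" "q \<le> 1" "c < real r"
  defines "F \<equiv> {i. i < n \<and> (\<forall>j\<in>S. \<not> X1 (i, j))}"
  shows "1 - exp (- real (card ({1..p} - S)) * (real (card {i\<in>F. Z i} choose r) * q ^ r * (1 - q) ^ card F))
    \<le> measure_pmf.prob (Pi_pmf ({0..<n} \<times> ({1..p} - S)) False (\<lambda>_. bernoulli_pmf q))
        {X2. observe S (\<lambda>x. if x \<in> {0..<n} \<times> S then X1 x else X2 x) Z \<in> intruder_event p n c}"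
proof -
  define N0 where "N0 = {i\<in>F. \<not> Z i}"
  define N1 where "N1 = {i\<in>F. Z i}"
  have "finite F"
    by (simp add: F_def)
  then have "card F = card N0 + card N1"
    by (subst card_Un_disjoint[symmetric]) (auto simp: N0_def N1_def intro: arg_cong[where f=card])
  then have "1 - exp (- real (card ({1..p} - S)) * (real (card {i\<in>F. Z i} choose r) * q ^ r * (1 - q) ^ card F))
      = 1 - exp (- real (card ({1..p} - S)) * (real (card N1 choose r) * q ^ r * (1 - q) ^ (card N0 + card N1)))"
    by (simp add: N1_def)
  also have "\<dots> \<le> measure_pmf.prob (Pi_pmf ({0..<n} \<times> ({1..p} - S)) False (\<lambda>_. bernoulli_pmf q))
          {X2. \<exists>j\<in>{1..p} - S. (\<forall>i\<in>N0. \<not> X2 (i, j)) \<and> r \<le> card {i\<in>N1. X2 (i, j)}}"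
    using assms(2,3) by (intro measure_Pi_pmf_exists_good_column) (auto simp: N0_def N1_def F_def)
  also have "\<dots> \<le> measure_pmf.prob (Pi_pmf ({0..<n} \<times> ({1..p} - S)) False (\<lambda>_. bernoulli_pmf q))
        {X2. observe S (\<lambda>x. if x \<in> {0..<n} \<times> S then X1 x else X2 x) Z \<in> intruder_event p n c}"
  proof (rule measure_pmf.finite_measure_mono[OF subsetI])
    fix X2 assume "X2 \<in> {X2. \<exists>j\<in>{1..p} - S. (\<forall>i\<in>N0. \<not> X2 (i, j)) \<and> r \<le> card {i\<in>N1. X2 (i, j)}}"
    then obtain j where j: "j \<in> {1..p}" "j \<notin> S"
      and avoid: "\<forall>i\<in>N0. \<not> X2 (i, j)" and hits: "r \<le> card {i\<in>N1. X2 (i, j)}"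
      by blast
    define X where "X = (\<lambda>x. if x \<in> {0..<n} \<times> S then X1 x else X2 x)"
    have free: "\<not> noiseless_outcome S X i \<longleftrightarrow> i \<in> F" if "i < n" for i
      using that by (auto simp: noiseless_outcome_def F_def X_def)
    have col: "X (i, j) = X2 (i, j)" for i
      using j(2) by (simp add: X_def)
    have "{i. i < n \<and> \<not> noiseless_outcome S X i \<and> Z i \<and> X (i, j)} = {i\<in>N1. X2 (i, j)}"
      using free col by (auto simp: N1_def F_def)
    then have "observe S X Z \<in> intruder_event p n c"
      using j avoid hits free col assms(4) by (intro observe_in_intruder_event) (auto simp: N0_def)
    then show "X2 \<in> {X2. observe S (\<lambda>x. if x \<in> {0..<n} \<times> S then X1 x else X2 x) Z \<in> intruder_event p n c}"
      by (simp add: X_def)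
  qed simp
  finally show ?thesis .
qed

lemma measure_defective_free_tests_binomial:
  assumes "finite S" "card S = k" "0 \<le> q" "q \<le> 1"
  shows "measure_pmf.prob (Pi_pmf ({0..<n} \<times> S) False (\<lambda>_. bernoulli_pmf q))
           {X. P (card {i. i < n \<and> (\<forall>j\<in>S. \<not> X (i, j))})}
       = measure_pmf.prob (binomial_pmf n ((1 - q) ^ k)) {x. P x}"
proof -
  let ?free = "\<lambda>X i. i \<in> {0..<n} \<and> (\<forall>j\<in>S. \<not> X (i, j))"
  have "card {i. i < n \<and> (\<forall>j\<in>S. \<not> X (i, j))} = card {i\<in>{0..<n}. ?free X i}" for X
    by (simp add: conj_commute)
  then have "measure_pmf.prob (Pi_pmf ({0..<n} \<times> S) False (\<lambda>_. bernoulli_pmf q))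
        {X. P (card {i. i < n \<and> (\<forall>j\<in>S. \<not> X (i, j))})}
      = measure_pmf.prob (map_pmf ?free (Pi_pmf ({0..<n} \<times> S) False (\<lambda>_. bernoulli_pmf q)))
          {w. P (card {i\<in>{0..<n}. w i})}"
    by (simp add: vimage_def)
  also have "\<dots> = measure_pmf.prob (Pi_pmf {0..<n} False (\<lambda>_. bernoulli_pmf ((1 - q) ^ k)))
      {w. P (card {i\<in>{0..<n}. w i})}"
    using assms by (subst map_pmf_rows_avoiding) auto
  also have "\<dots> = measure_pmf.prob (binomial_pmf n ((1 - q) ^ k)) {x. P x}"
    using assms(3,4) by (subst measure_Pi_pmf_card_eq_binomial) (auto intro: power_le_one)
  finally show ?thesis .
qed

lemma measure_intruder_given_defective_columns:
  fixes n :: nat and X1 :: "nat \<times> nat \<Rightarrow> bool"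
  assumes S: "S \<subseteq> {1..p}" "card S = k" and q: "0 \<le> q" "q \<le> 1" and \<rho>: "0 \<le> \<rho>" "\<rho> \<le> 1"
    and "c < real r"
    and \<beta>: "\<And>m. mid \<le> real m \<Longrightarrow> measure_pmf.prob (binomial_pmf m \<rho>) {x. x < lo} \<le> \<beta>"
  defines "F \<equiv> {i. i < n \<and> (\<forall>j\<in>S. \<not> X1 (i, j))}"
  assumes "card F \<le> hi" "mid \<le> real (card F)"
  shows "1 - exp (- real (p - k) * (real (lo choose r) * q ^ r * (1 - q) ^ hi)) - \<beta>
    \<le> measure_pmf.prob (bind_pmf (Pi_pmf {0..<n} False (\<lambda>_. bernoulli_pmf \<rho>)) (\<lambda>Z.
         map_pmf (\<lambda>X2. observe S (\<lambda>x. if x \<in> {0..<n} \<times> S then X1 x else X2 x) Z)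
           (Pi_pmf ({0..<n} \<times> ({1..p} - S)) False (\<lambda>_. bernoulli_pmf q))))
         (intruder_event p n c)"
proof -
  let ?PZ = "Pi_pmf {0..<n} False (\<lambda>_. bernoulli_pmf \<rho>)"
  define e where "e = exp (- real (p - k) * (real (lo choose r) * q ^ r * (1 - q) ^ hi))"
  have "finite S"
    using S(1) by (rule finite_subset) simp
  then have "card ({1..p} - S) = p - k"
    using S by (simp add: card_Diff_subset)
  have "measure_pmf.prob ?PZ {Z. card {i\<in>F. Z i} < lo} \<le> \<beta>"
    using \<rho> \<open>mid \<le> real (card F)\<close> by (subst measure_Pi_pmf_card_eq_binomial) (auto simp: F_def intro: \<beta>)
  moreover have "1 - e \<le> measure_pmf.prob (map_pmf (\<lambda>X2. observe S (\<lambda>x. if x \<in> {0..<n} \<times> S then X1 x else X2 x) Z)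
      (Pi_pmf ({0..<n} \<times> ({1..p} - S)) False (\<lambda>_. bernoulli_pmf q))) (intruder_event p n c)"
    if "\<not> card {i\<in>F. Z i} < lo" for Z
  proof -
    have "real (lo choose r) * q ^ r * (1 - q) ^ hi
        \<le> real (card {i\<in>F. Z i} choose r) * q ^ r * (1 - q) ^ card F"
      using that q \<open>card F \<le> hi\<close> by (intro mult_mono power_decreasing) (auto intro: binomial_right_mono)
    then have "exp (- real (card ({1..p} - S)) * (real (card {i\<in>F. Z i} choose r) * q ^ r * (1 - q) ^ card F)) \<le> e"
      unfolding e_def \<open>card ({1..p} - S) = p - k\<close> by (simp add: mult_left_mono)
    then show ?thesis
      using measure_intruder_given_defective_columns_noise[OF S(1) q \<open>c < real r\<close>, of n X1 Z]
      by (simp add: F_def vimage_def)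
  qed
  then have "1 - e - measure_pmf.prob ?PZ {Z. card {i\<in>F. Z i} < lo} \<le> measure_pmf.prob
      (bind_pmf ?PZ (\<lambda>Z. map_pmf (\<lambda>X2. observe S (\<lambda>x. if x \<in> {0..<n} \<times> S then X1 x else X2 x) Z)
        (Pi_pmf ({0..<n} \<times> ({1..p} - S)) False (\<lambda>_. bernoulli_pmf q)))) (intruder_event p n c)"
    by (intro measure_pmf_prob_bind_ge) (auto simp: e_def)
  ultimately show ?thesis
    unfolding e_def by linarith
qed

lemma measure_tests_pmf_intruder_ge:
  assumes S: "S \<subseteq> {1..p}" "card S = k" and q: "0 \<le> q" "q \<le> 1" and \<rho>: "0 \<le> \<rho>" "\<rho> \<le> 1"
    and "c < real r"
    and \<beta>: "\<And>m. mid \<le> real m \<Longrightarrow> measure_pmf.prob (binomial_pmf m \<rho>) {x. x < lo} \<le> \<beta>"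
  shows "1 - exp (- real (p - k) * (real (lo choose r) * q ^ r * (1 - q) ^ hi)) - \<beta>
           - measure_pmf.prob (binomial_pmf n ((1 - q) ^ k)) {x. hi < x \<or> real x < mid}
         \<le> measure_pmf.prob (tests_pmf p n q \<rho> S) (intruder_event p n c)"
proof -
  let ?F = "\<lambda>X1. card {i. i < n \<and> (\<forall>j\<in>S. \<not> X1 (i, j))}"
  have "0 \<le> \<beta>"
    using \<beta>[OF real_nat_ceiling_ge] by (rule order_trans[OF measure_nonneg])
  moreover have "0 \<le> exp (- real (p - k) * (real (lo choose r) * q ^ r * (1 - q) ^ hi))"
    by simp
  ultimately have "1 - exp (- real (p - k) * (real (lo choose r) * q ^ r * (1 - q) ^ hi)) - \<beta> \<le> 1"
    by linarith
  then have "1 - exp (- real (p - k) * (real (lo choose r) * q ^ r * (1 - q) ^ hi)) - \<beta>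
      - measure_pmf.prob (Pi_pmf ({0..<n} \<times> S) False (\<lambda>_. bernoulli_pmf q)) {X1. hi < ?F X1 \<or> real (?F X1) < mid}
      \<le> measure_pmf.prob (tests_pmf p n q \<rho> S) (intruder_event p n c)"
    unfolding tests_pmf_split[OF S(1)]
    using measure_intruder_given_defective_columns[OF S q \<rho> \<open>c < real r\<close> \<beta>]
    by (intro measure_pmf_prob_bind_ge) (auto simp: not_less)
  moreover have "finite S"
    using S(1) by (rule finite_subset) simp
  ultimately show ?thesis
    using measure_defective_free_tests_binomial[OF _ S(2) q, of n "\<lambda>x. hi < x \<or> real x < mid"] by simp
qed

lemma measure_gt_pmf_intruder_ge:
  assumes "k \<le> p" "0 \<le> \<nu>" "\<nu> \<le> real k" "0 \<le> \<rho>" "\<rho> \<le> 1" "c < real r"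
    and "\<And>m. mid \<le> real m \<Longrightarrow> measure_pmf.prob (binomial_pmf m \<rho>) {x. x < lo} \<le> \<beta>"
  shows "1 - exp (- real (p - k) * (real (lo choose r) * (\<nu> / k) ^ r * (1 - \<nu> / k) ^ hi)) - \<beta>
           - measure_pmf.prob (binomial_pmf n ((1 - \<nu> / k) ^ k)) {x. hi < x \<or> real x < mid}
         \<le> measure_pmf.prob (gt_pmf p k n \<nu> \<rho>) (intruder_event p n c)"
    (is "?a \<le> _")
proof -
  let ?\<S> = "{S. S \<subseteq> {1..p} \<and> card S = k}"
  have q: "0 \<le> \<nu> / k" "\<nu> / k \<le> 1"
    using assms(2,3) by (auto simp: divide_le_eq_1)
  have per_S: "?a \<le> measure_pmf.prob (tests_pmf p n (\<nu> / k) \<rho> S) (intruder_event p n c)" if "S \<in> ?\<S>" for S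
    using that q assms(4-7) by (intro measure_tests_pmf_intruder_ge) auto
  obtain S where "S \<subseteq> {1..p}" "card S = k"
    using obtain_subset_with_card_n[of k "{1..p}"] assms(1) by auto
  then have "S \<in> ?\<S>"
    by simp
  then have "?\<S> \<noteq> {}"
    by blast
  have "?a \<le> 1"
    using per_S[OF \<open>S \<in> ?\<S>\<close>] measure_pmf.prob_le_1[of "tests_pmf p n (\<nu> / k) \<rho> S" "intruder_event p n c"]
    by linarith
  then have "?a - measure_pmf.prob (pmf_of_set ?\<S>) {}
      \<le> measure_pmf.prob (bind_pmf (pmf_of_set ?\<S>) (tests_pmf p n (\<nu> / real k) \<rho>)) (intruder_event p n c)"
    using per_S \<open>?\<S> \<noteq> {}\<close> by (intro measure_pmf_prob_bind_ge) (auto simp: set_pmf_of_set)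
  then show ?thesis
    by (simp add: gt_pmf_conv_tests_pmf)
qed

section \<open>Deviation bounds and binomial coefficients\<close>

lemma binomial_two_sided_deviation:
  assumes "0 \<le> \<pi>" "\<pi> \<le> 1" "0 < n" "0 \<le> \<delta>"
  shows "measure_pmf.prob (binomial_pmf n \<pi>)
           {x. nat \<lfloor>real n * \<pi> * (1 + \<delta>)\<rfloor> < x \<or> real x < real n * \<pi> * (1 - \<delta>)}
         \<le> 2 * exp (- 2 * real n * \<pi>\<^sup>2 * \<delta>\<^sup>2)"
proof -
  have "{x. nat \<lfloor>real n * \<pi> * (1 + \<delta>)\<rfloor> < x \<or> real x < real n * \<pi> * (1 - \<delta>)}
      \<subseteq> {x. \<bar>real x - real n * \<pi>\<bar> \<ge> real n * \<pi> * \<delta>}"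
  proof safe
    fix x assume "nat \<lfloor>real n * \<pi> * (1 + \<delta>)\<rfloor> < x"
    then have "real n * \<pi> * (1 + \<delta>) < real x"
      by linarith
    then show "real n * \<pi> * \<delta> \<le> \<bar>real x - real n * \<pi>\<bar>"
      by (simp add: algebra_simps)
  qed (simp add: algebra_simps)
  then have "measure_pmf.prob (binomial_pmf n \<pi>)
        {x. nat \<lfloor>real n * \<pi> * (1 + \<delta>)\<rfloor> < x \<or> real x < real n * \<pi> * (1 - \<delta>)}
      \<le> measure_pmf.prob (binomial_pmf n \<pi>) {x. \<bar>real x - real n * \<pi>\<bar> \<ge> real n * \<pi> * \<delta>}"
    by (intro measure_pmf.finite_measure_mono) auto
  also have "\<dots> \<le> 2 * exp (- 2 * (real n * \<pi> * \<delta>)\<^sup>2 / real n)"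
    using assms by (intro binomial_distribution.prob_abs_ge) (auto simp: binomial_distribution_def)
  also have "- 2 * (real n * \<pi> * \<delta>)\<^sup>2 / real n = - 2 * real n * \<pi>\<^sup>2 * \<delta>\<^sup>2"
    using assms(3) by (simp add: power2_eq_square)
  finally show ?thesis .
qed

lemma binomial_lower_deviation:
  assumes "0 \<le> \<rho>" "\<rho> \<le> 1" "0 < mid" "0 \<le> \<delta>" "\<delta> \<le> 1" "mid \<le> real m"
  shows "measure_pmf.prob (binomial_pmf m \<rho>) {x. x < nat \<lceil>mid * \<rho> * (1 - \<delta>)\<rceil>}
         \<le> exp (- 2 * mid * \<rho>\<^sup>2 * \<delta>\<^sup>2)"
proof -
  have "0 < m"
    using assms(3,6) by linarith
  have "mid * \<rho> * (1 - \<delta>) \<le> real m * \<rho> * (1 - \<delta>)"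
    using assms by (intro mult_right_mono) auto
  then have "{x. x < nat \<lceil>mid * \<rho> * (1 - \<delta>)\<rceil>} \<subseteq> {x. real x \<le> real m * \<rho> - real m * \<rho> * \<delta>}"
    by (auto simp: algebra_simps) linarith
  then have "measure_pmf.prob (binomial_pmf m \<rho>) {x. x < nat \<lceil>mid * \<rho> * (1 - \<delta>)\<rceil>}
      \<le> measure_pmf.prob (binomial_pmf m \<rho>) {x. real x \<le> real m * \<rho> - real m * \<rho> * \<delta>}"
    by (intro measure_pmf.finite_measure_mono) auto
  also have "\<dots> \<le> exp (- 2 * (real m * \<rho> * \<delta>)\<^sup>2 / real m)"
    using assms \<open>0 < m\<close> by (intro binomial_distribution.prob_le) (auto simp: binomial_distribution_def)
  also have "\<dots> = exp (- 2 * real m * \<rho>\<^sup>2 * \<delta>\<^sup>2)"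
    using \<open>0 < m\<close> by (simp add: power2_eq_square)
  also have "\<dots> \<le> exp (- 2 * mid * \<rho>\<^sup>2 * \<delta>\<^sup>2)"
    using assms(6) by (simp add: mult_right_mono)
  finally show ?thesis .
qed

lemma power_diff_le_fact_mult_binomial:
  assumes "r \<le> m"
  shows "(real m - real r) ^ r \<le> fact r * real (m choose r)"
proof -
  have "(real m - real r) ^ r = (\<Prod>i = 0..<r. real m - real r)"
    by simp
  also have "\<dots> \<le> (\<Prod>i = 0..<r. real m - of_nat i)"
    using assms by (intro prod_mono) auto
  also have "\<dots> = fact r * real (m choose r)"
    by (simp add: binomial_gbinomial gbinomial_mult_fact)
  finally show ?thesis .
qed

lemma fact_le_exp_bound: "fact n \<le> (real n + 1) ^ (n + 1) * exp (- real n)"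
proof (induction n)
  case (Suc r)
  let ?a = "real r + 1" and ?b = "real (Suc r) + 1"
  have "(1 + (- 1) / real (Suc r + 1)) ^ (Suc r + 1) \<le> exp (- 1)"
    by (intro exp_ge_one_plus_x_over_n_power_n) auto
  moreover have "1 + (- 1) / real (Suc r + 1) = ?a / ?b"
    by (simp add: field_simps)
  ultimately have key: "?a ^ (Suc r + 1) \<le> ?b ^ (Suc r + 1) * exp (- 1)"
    by (simp add: power_divide divide_le_eq mult.commute)
  have "fact (Suc r) = ?a * fact r"
    by (simp add: add.commute)
  also have "\<dots> \<le> ?a * (?a ^ (r + 1) * exp (- real r))"
    using Suc.IH by (rule mult_left_mono) simp
  also have "\<dots> = ?a ^ (Suc r + 1) * exp (- real r)"
    by (simp add: mult.assoc)
  also have "\<dots> \<le> ?b ^ (Suc r + 1) * exp (- 1) * exp (- real r)"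
    using key by (rule mult_right_mono) simp
  also have "\<dots> = ?b ^ (Suc r + 1) * exp (- real (Suc r))"
    by (simp add: mult.assoc exp_add[symmetric])
  finally show ?case .
qed simp

lemma binomial_ge_exp_bound:
  assumes "r \<le> m"
  shows "((real m - real r) / (real r + 1)) ^ r * exp (real r) / (real r + 1) \<le> real (m choose r)"
proof -
  have "((real m - real r) / (real r + 1)) ^ r * exp (real r) / (real r + 1)
      = (real m - real r) ^ r / ((real r + 1) ^ (r + 1) * exp (- real r))"
    by (simp add: power_divide exp_minus field_simps)
  also have "\<dots> \<le> (real m - real r) ^ r / fact r"
    using assms by (intro divide_left_mono fact_le_exp_bound) auto
  also have "\<dots> \<le> real (m choose r)"
    using power_diff_le_fact_mult_binomial[OF assms] by (simp add: divide_le_eq mult.commute)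
  finally show ?thesis .
qed

lemma exp_le_one_minus_power:
  assumes "0 \<le> q" "q < 1"
  shows "exp (- real h * q / (1 - q)) \<le> (1 - q) ^ h"
proof -
  have "ln (1 / (1 - q)) \<le> 1 / (1 - q) - 1"
    using assms by (intro ln_le_minus_one) auto
  moreover have "ln (1 / (1 - q)) = - ln (1 - q)" "1 / (1 - q) - 1 = q / (1 - q)"
    using assms by (simp_all add: ln_div field_simps)
  ultimately have "real h * (- (q / (1 - q))) \<le> real h * ln (1 - q)"
    by (intro mult_left_mono) auto
  then have "- real h * q / (1 - q) \<le> real h * ln (1 - q)"
    by simp
  then have "exp (- real h * q / (1 - q)) \<le> exp (real h * ln (1 - q))"
    by simp
  also have "\<dots> = (1 - q) ^ h"
    using assms by (simp add: exp_of_nat_mult)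
  finally show ?thesis .
qed

lemma binomial_term_ge:
  assumes "r \<le> m" "0 \<le> q" "q < 1" "0 \<le> \<xi>" "\<xi> \<le> (real m - real r) * q / (real r + 1)"
  shows "\<xi> ^ r * exp (real r) / (real r + 1) * exp (- real h * q / (1 - q))
         \<le> real (m choose r) * q ^ r * (1 - q) ^ h"
proof -
  have "\<xi> ^ r \<le> ((real m - real r) / (real r + 1)) ^ r * q ^ r"
    using assms by (simp add: power_mult_distrib[symmetric] power_mono)
  then have "\<xi> ^ r * exp (real r) / (real r + 1)
      \<le> ((real m - real r) / (real r + 1)) ^ r * exp (real r) / (real r + 1) * q ^ r"
    by (simp add: divide_right_mono mult.commute mult.left_commute mult_left_mono)
  also have "\<dots> \<le> real (m choose r) * q ^ r"
    using assms(1,2) by (intro mult_right_mono binomial_ge_exp_bound) auto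
  finally show ?thesis
    using assms(2,3) by (intro mult_mono exp_le_one_minus_power) auto
qed

section \<open>Asymptotics\<close>

lemma tendsto_exp_neg_at_top:
  fixes f :: "'a \<Rightarrow> real"
  assumes "filterlim f at_top F"
  shows "((\<lambda>x. exp (- f x)) \<longlongrightarrow> 0) F"
proof -
  have "((\<lambda>y::real. exp (- y)) \<longlongrightarrow> 0) at_top"
    by real_asymp
  then show ?thesis
    by (rule filterlim_compose[OF _ assms])
qed

(* delta perturbs all concentration thresholds; k = Theta(p powr theta) is only used through
   log p = o(k) and k = o(p). *)
locale intruder_asymptotics =
  fixes k :: "nat \<Rightarrow> nat" and \<nu> \<rho> \<gamma> \<Phi> \<delta> :: real
  assumes nu_pos: "0 < \<nu>" and rho_pos: "0 < \<rho>" and rho_less_1: "\<rho> < 1"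
    and gamma_pos: "0 < \<gamma>" and rho_less_Phi: "\<rho> < \<Phi>"
    and delta_pos: "0 < \<delta>" and delta_le_half: "\<delta> \<le> 1 / 2"
    and ln_smallo_k: "(\<lambda>p. ln (real p)) \<in> o(\<lambda>p. real (k p))"
    and k_smallo: "(\<lambda>p. real (k p)) \<in> o(\<lambda>p. real p)"
begin

definition \<alpha> :: real where "\<alpha> = \<gamma> * \<nu> * exp (- \<nu>)"

(* lo * q is about alpha rho (1 - delta)^3 log p and r is about Phi alpha log p, so xi stays
   below (lo - r) q / (r + 1), the base in Stirling's bound for (lo choose r) q^r. *)
definition \<xi> :: real where "\<xi> = \<rho> * (1 - \<delta>) ^ 4 / \<Phi>"

(* (p - k) * hit_prob p grows like p powr kappa up to logarithmic factors. *)
definition \<kappa> :: real where "\<kappa> = 1 + \<Phi> * \<alpha> * ln \<xi> + \<Phi> * \<alpha> - (1 + \<delta>)\<^sup>2 * \<alpha>"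

(* For p items: pi is the probability that a test contains no defective; hi and mid bracket
   the number of such tests, lo bounds the number of false positives among them from below,
   and hit_prob bounds the probability that a non-defective column avoids all negative tests
   and meets r > c false positives. *)
definition q :: "nat \<Rightarrow> real" where "q p = \<nu> / real (k p)"
definition \<pi> :: "nat \<Rightarrow> real" where "\<pi> p = (1 - q p) ^ k p"
definition n :: "nat \<Rightarrow> nat" where "n p = nat \<lceil>\<gamma> * real (k p) * ln (real p)\<rceil>"
definition c :: "nat \<Rightarrow> real" where "c p = \<Phi> * \<nu> * exp (- \<nu>) * \<gamma> * ln (real p)"
definition r :: "nat \<Rightarrow> nat" where "r p = nat \<lfloor>c p\<rfloor> + 1"
definition mid :: "nat \<Rightarrow> real" where "mid p = real (n p) * \<pi> p * (1 - \<delta>)"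
definition lo :: "nat \<Rightarrow> nat" where "lo p = nat \<lceil>mid p * \<rho> * (1 - \<delta>)\<rceil>"
definition hi :: "nat \<Rightarrow> nat" where "hi p = nat \<lfloor>real (n p) * \<pi> p * (1 + \<delta>)\<rfloor>"
definition hit_prob :: "nat \<Rightarrow> real"
  where "hit_prob p = real (lo p choose r p) * q p ^ r p * (1 - q p) ^ hi p"

lemma Phi_pos: "0 < \<Phi>"
  using rho_pos rho_less_Phi by linarith

lemma alpha_pos: "0 < \<alpha>"
  using gamma_pos nu_pos by (simp add: \<alpha>_def)

lemma xi_pos: "0 < \<xi>"
  using rho_pos Phi_pos delta_le_half by (simp add: \<xi>_def)

lemma c_eq: "c p = \<Phi> * \<alpha> * ln (real p)"
  by (simp add: c_def \<alpha>_def mult_ac)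

lemma n_bounds:
  assumes "0 \<le> ln (real p)"
  shows "\<gamma> * real (k p) * ln (real p) \<le> real (n p)" "real (n p) \<le> \<gamma> * real (k p) * ln (real p) + 1"
proof -
  have "0 \<le> \<gamma> * real (k p) * ln (real p)"
    using gamma_pos assms by simp
  then show "\<gamma> * real (k p) * ln (real p) \<le> real (n p)" "real (n p) \<le> \<gamma> * real (k p) * ln (real p) + 1"
    unfolding n_def by linarith+
qed

lemma r_bounds:
  assumes "0 \<le> ln (real p)"
  shows "c p < real (r p)" "real (r p) \<le> c p + 1"
proof -
  have "0 \<le> c p"
    using Phi_pos alpha_pos assms by (simp add: c_eq)
  then show "c p < real (r p)" "real (r p) \<le> c p + 1"
    unfolding r_def by linarith+
qed

lemma eventually_ln_ge: "\<forall>\<^sub>F p in at_top. B \<le> ln (real p)"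
  by real_asymp

lemma eventually_ln_le_k:
  assumes "0 < \<epsilon>"
  shows "\<forall>\<^sub>F p in at_top. ln (real p) \<le> \<epsilon> * real (k p)"
  using landau_o.smallD[OF ln_smallo_k assms] by eventually_elim (simp add: abs_le_iff)

lemma eventually_k_ge: "\<forall>\<^sub>F p in at_top. B \<le> real (k p)"
  using eventually_ln_le_k[OF zero_less_one] eventually_ln_ge[of B] by eventually_elim simp

lemma filterlim_k: "filterlim k at_top at_top"
  unfolding filterlim_at_top
proof
  fix N :: nat
  show "\<forall>\<^sub>F p in at_top. N \<le> k p"
    using eventually_k_ge[of "real N"] by eventually_elim simp
qed

lemma eventually_k_le_half: "\<forall>\<^sub>F p in at_top. real (k p) \<le> real p / 2"
proof -
  have "\<forall>\<^sub>F p in at_top. norm (real (k p)) \<le> 1 / 2 * norm (real p)"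
    by (rule landau_o.smallD[OF k_smallo]) simp
  then show ?thesis
    by eventually_elim simp
qed

lemma eventually_q_small: "\<forall>\<^sub>F p in at_top. 0 < q p \<and> q p < 1 \<and> 1 / (1 - q p) \<le> 1 + \<delta>"
  using eventually_k_ge[of "\<nu> * (1 + \<delta>) / \<delta>"]
proof eventually_elim
  case (elim p)
  have "0 < \<nu> * (1 + \<delta>) / \<delta>"
    using nu_pos delta_pos by simp
  then have "0 < real (k p)"
    using elim by linarith
  then have "0 < q p"
    using nu_pos by (simp add: q_def)
  have "\<nu> * (1 + \<delta>) \<le> real (k p) * \<delta>"
    using elim delta_pos by (simp add: divide_le_eq)
  then have "(1 + \<delta>) * q p \<le> \<delta>"
    using \<open>0 < real (k p)\<close> by (simp add: q_def field_simps)
  then have "1 \<le> (1 + \<delta>) * (1 - q p)"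
    by (simp add: algebra_simps)
  moreover have "0 < 1 - q p"
  proof (rule zero_less_mult_pos)
    show "0 < (1 + \<delta>) * (1 - q p)"
      using \<open>1 \<le> (1 + \<delta>) * (1 - q p)\<close> by linarith
    show "0 < 1 + \<delta>"
      using delta_pos by linarith
  qed
  ultimately show ?case
    using \<open>0 < q p\<close> by (simp add: divide_le_eq)
qed

lemma eventually_pi_bounds: "\<forall>\<^sub>F p in at_top. exp (- \<nu>) * (1 - \<delta>) \<le> \<pi> p \<and> \<pi> p \<le> exp (- \<nu>)"
proof -
  have "(\<pi> \<longlongrightarrow> exp (- \<nu>)) at_top"
    using filterlim_compose[OF tendsto_exp_limit_sequentially[of "- \<nu>"] filterlim_k]
    unfolding \<pi>_def q_def by simp
  moreover have "exp (- \<nu>) * (1 - \<delta>) < exp (- \<nu>)"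
    using delta_pos by simp
  ultimately have "\<forall>\<^sub>F p in at_top. exp (- \<nu>) * (1 - \<delta>) < \<pi> p"
    by (rule order_tendstoD(1))
  then show ?thesis
    using eventually_k_ge[of "\<nu> + 1"]
  proof eventually_elim
    case (elim p)
    have "(1 + (- \<nu>) / real (k p)) ^ k p \<le> exp (- \<nu>)"
      using elim nu_pos by (intro exp_ge_one_plus_x_over_n_power_n) auto
    then show ?case
      using elim by (simp add: \<pi>_def q_def)
  qed
qed


lemma xi_le: "\<xi> \<le> \<rho> / \<Phi>"
proof -
  have "(1 - \<delta>) ^ 4 \<le> 1"
    using delta_pos delta_le_half by (intro power_le_one) auto
  then show ?thesis
    using rho_pos Phi_pos by (simp add: \<xi>_def divide_right_mono mult_left_le)
qed

lemma ln_xi_nonpos: "ln \<xi> \<le> 0"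
proof -
  have "\<rho> / \<Phi> < 1"
    using rho_less_Phi Phi_pos by simp
  then show ?thesis
    using xi_pos xi_le by simp
qed

lemma eventually_lo_q_ge:
  "\<forall>\<^sub>F p in at_top. \<alpha> * \<rho> * (1 - \<delta>) ^ 3 * ln (real p) \<le> real (lo p) * q p"
  using eventually_ln_ge[of 0] eventually_q_small eventually_pi_bounds
proof eventually_elim
  case (elim p)
  let ?L = "ln (real p)" and ?f = "(1 - \<delta>) * \<rho> * (1 - \<delta>) * q p"
  have "0 < real (k p)"
    using elim(2) nu_pos by (simp add: q_def zero_less_divide_iff)
  have "0 \<le> ?f"
    using elim(2) rho_pos delta_le_half by simp
  have "\<alpha> * \<rho> * (1 - \<delta>) ^ 3 * ?L = \<gamma> * real (k p) * ?L * (exp (- \<nu>) * (1 - \<delta>)) * ?f"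
    using \<open>0 < real (k p)\<close> by (simp add: \<alpha>_def q_def power3_eq_cube field_simps)
  also have "\<dots> \<le> real (n p) * \<pi> p * ?f"
    using n_bounds(1)[OF elim(1)] elim(3) delta_le_half \<open>0 \<le> ?f\<close>
    by (intro mult_right_mono mult_mono) auto
  also have "\<dots> = mid p * \<rho> * (1 - \<delta>) * q p"
    by (simp add: mid_def mult_ac)
  also have "\<dots> \<le> real (lo p) * q p"
    unfolding lo_def using elim(2) by (intro mult_right_mono real_nat_ceiling_ge) auto
  finally show ?case .
qed

lemma eventually_r_q_le: "\<forall>\<^sub>F p in at_top. real (r p) * q p \<le> 1"
proof -
  have "0 < 1 / (2 * \<Phi> * \<alpha> * \<nu>)"
    using Phi_pos alpha_pos nu_pos by simp
  from eventually_ln_le_k[OF this] show ?thesis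
    using eventually_ln_ge[of 0] eventually_q_small eventually_k_ge[of "2 * \<nu>"]
  proof eventually_elim
    case (elim p)
    let ?L = "ln (real p)"
    have "0 < real (k p)"
      using elim(3) nu_pos by (simp add: q_def zero_less_divide_iff)
    have "?L / real (k p) \<le> 1 / (2 * \<Phi> * \<alpha> * \<nu>)"
      using elim(1) \<open>0 < real (k p)\<close> by (simp add: divide_le_eq)
    then have "\<Phi> * \<alpha> * \<nu> * (?L / real (k p)) \<le> 1 / 2"
      using Phi_pos alpha_pos nu_pos by (simp add: le_divide_eq mult_ac)
    moreover have "\<nu> / real (k p) \<le> 1 / 2"
      using elim(4) \<open>0 < real (k p)\<close> by (simp add: divide_le_eq)
    moreover have "real (r p) * q p \<le> (c p + 1) * q p"
      using r_bounds(2)[OF elim(2)] elim(3) by (intro mult_right_mono) auto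
    moreover have "(c p + 1) * q p = \<Phi> * \<alpha> * \<nu> * (?L / real (k p)) + \<nu> / real (k p)"
      by (simp add: c_eq q_def algebra_simps)
    ultimately show ?case
      by linarith
  qed
qed

lemma eventually_xi_le:
  "\<forall>\<^sub>F p in at_top. r p \<le> lo p \<and> \<xi> \<le> (real (lo p) - real (r p)) * q p / (real (r p) + 1)"
  using eventually_ln_ge[of 0] eventually_ln_ge[of "(1 + 2 * \<rho> / \<Phi>) / (\<alpha> * \<rho> * (1 - \<delta>) ^ 3 * \<delta>)"]
    eventually_lo_q_ge eventually_r_q_le eventually_q_small
proof eventually_elim
  case (elim p)
  let ?tL = "\<alpha> * \<rho> * (1 - \<delta>) ^ 3 * ln (real p)"
  have "0 < \<alpha> * \<rho> * (1 - \<delta>) ^ 3 * \<delta>"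
    using alpha_pos rho_pos delta_pos delta_le_half by simp
  then have "1 + 2 * \<rho> / \<Phi> \<le> \<delta> * ?tL"
    using elim(2) by (simp add: pos_divide_le_eq mult_ac)
  have pow4: "(1 - \<delta>) ^ 4 = (1 - \<delta>) ^ 3 * (1 - \<delta>)"
    by (simp add: power_Suc2[symmetric])
  have "\<rho> * (1 - \<delta>) ^ 4 * \<alpha> * ln (real p) = ?tL - \<delta> * ?tL"
    unfolding pow4 by (simp add: algebra_simps)
  moreover have "\<xi> * (c p + 2) = \<rho> * (1 - \<delta>) ^ 4 * \<alpha> * ln (real p) + 2 * \<xi>"
    using Phi_pos by (simp add: \<xi>_def c_eq field_simps)
  ultimately have "\<xi> * (c p + 2) = ?tL - \<delta> * ?tL + 2 * \<xi>"
    by simp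
  moreover have "\<xi> * (real (r p) + 1) \<le> \<xi> * (c p + 2)"
    using r_bounds(2)[OF elim(1)] xi_pos by (intro mult_left_mono) auto
  ultimately have "\<xi> * (real (r p) + 1) \<le> real (lo p) * q p - real (r p) * q p"
    using elim(3,4) xi_le \<open>1 + 2 * \<rho> / \<Phi> \<le> \<delta> * ?tL\<close> by linarith
  then have xi_r: "\<xi> * (real (r p) + 1) \<le> (real (lo p) - real (r p)) * q p"
    by (simp add: algebra_simps)
  moreover have "0 < \<xi> * (real (r p) + 1)"
    using xi_pos by simp
  ultimately have "0 < (real (lo p) - real (r p)) * q p"
    by linarith
  then have "r p \<le> lo p"
    using elim(5) by (simp add: zero_less_mult_iff)
  moreover have "\<xi> \<le> (real (lo p) - real (r p)) * q p / (real (r p) + 1)"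
    using xi_r by (simp add: pos_le_divide_eq)
  ultimately show ?case
    by simp
qed

lemma eventually_hi_q_le:
  "\<forall>\<^sub>F p in at_top. real (hi p) * q p / (1 - q p) \<le> (1 + \<delta>)\<^sup>2 * \<alpha> * ln (real p) + 1"
  using eventually_ln_ge[of 0] eventually_q_small eventually_pi_bounds
    eventually_k_ge[of "(1 + \<delta>)\<^sup>2 * exp (- \<nu>) * \<nu>"]
proof eventually_elim
  case (elim p)
  let ?L = "ln (real p)"
  have "0 < real (k p)"
    using elim(2) nu_pos by (simp add: q_def zero_less_divide_iff)
  have "0 \<le> exp (- \<nu>) * (1 - \<delta>)"
    using delta_le_half by simp
  then have "0 \<le> \<pi> p"
    using elim(3) by linarith
  then have "0 \<le> real (n p) * \<pi> p * (1 + \<delta>)"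
    using delta_pos by simp
  then have "real (hi p) \<le> real (n p) * \<pi> p * (1 + \<delta>)"
    unfolding hi_def by (rule of_nat_floor)
  also have "\<dots> \<le> (\<gamma> * real (k p) * ?L + 1) * exp (- \<nu>) * (1 + \<delta>)"
    using n_bounds(2)[OF elim(1)] elim(3) delta_pos \<open>0 \<le> \<pi> p\<close> by (intro mult_right_mono mult_mono) auto
  finally have "real (hi p) * q p \<le> (\<gamma> * real (k p) * ?L + 1) * exp (- \<nu>) * (1 + \<delta>) * q p"
    using elim(2) by (intro mult_right_mono) auto
  also have "\<dots> = (1 + \<delta>) * \<alpha> * ?L + (1 + \<delta>) * exp (- \<nu>) * \<nu> / real (k p)"
    using \<open>0 < real (k p)\<close> by (simp add: \<alpha>_def q_def field_simps)
  finally have hq: "real (hi p) * q p \<le> (1 + \<delta>) * \<alpha> * ?L + (1 + \<delta>) * exp (- \<nu>) * \<nu> / real (k p)" .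
  have "0 \<le> real (hi p) * q p"
    using elim(2) by simp
  then have "0 \<le> (1 + \<delta>) * \<alpha> * ?L + (1 + \<delta>) * exp (- \<nu>) * \<nu> / real (k p)"
    using hq by linarith
  then have "real (hi p) * q p * (1 / (1 - q p))
      \<le> ((1 + \<delta>) * \<alpha> * ?L + (1 + \<delta>) * exp (- \<nu>) * \<nu> / real (k p)) * (1 + \<delta>)"
    using hq elim(2) by (intro mult_mono) auto
  also have "\<dots> = (1 + \<delta>)\<^sup>2 * \<alpha> * ?L + (1 + \<delta>)\<^sup>2 * exp (- \<nu>) * \<nu> / real (k p)"
    by (simp add: power2_eq_square algebra_simps)
  also have "(1 + \<delta>)\<^sup>2 * exp (- \<nu>) * \<nu> / real (k p) \<le> 1"
    using elim(4) \<open>0 < real (k p)\<close> by (simp add: divide_le_eq)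
  finally show ?case
    by simp
qed

lemma eventually_hit_prob_ge:
  "\<forall>\<^sub>F p in at_top. exp (\<kappa> * ln (real p) + ln \<xi> - 1) / (2 * (\<Phi> * \<alpha> * ln (real p) + 2))
     \<le> real (p - k p) * hit_prob p"
  using eventually_ln_ge[of 0] eventually_gt_at_top[of 0] eventually_q_small eventually_xi_le
    eventually_hi_q_le eventually_k_le_half
proof eventually_elim
  case (elim p)
  let ?L = "ln (real p)" and ?B = "(1 + \<delta>)\<^sup>2 * \<alpha> * ln (real p) + 1"
  have "0 \<le> c p"
    using Phi_pos alpha_pos elim(1) by (simp add: c_eq)
  have "(c p + 1) * ln \<xi> \<le> real (r p) * ln \<xi>"
    using r_bounds(2)[OF elim(1)] ln_xi_nonpos by (intro mult_right_mono_neg) auto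
  then have "exp ((c p + 1) * ln \<xi> + c p) \<le> exp (real (r p) * ln \<xi> + real (r p))"
    using r_bounds(1)[OF elim(1)] by simp
  also have "\<dots> = \<xi> ^ r p * exp (real (r p))"
    using xi_pos by (simp add: exp_add exp_of_nat_mult)
  finally have A: "exp ((c p + 1) * ln \<xi> + c p) / (c p + 2) \<le> \<xi> ^ r p * exp (real (r p)) / (real (r p) + 1)"
    using r_bounds(2)[OF elim(1)] \<open>0 \<le> c p\<close> xi_pos by (intro frac_le) auto
  have B: "exp (- ?B) \<le> exp (- real (hi p) * q p / (1 - q p))"
    using elim(5) by simp
  have P: "exp ?L / 2 \<le> real (p - k p)"
    using elim(2,6) by (simp add: of_nat_diff)
  have "\<kappa> * ?L + ln \<xi> - 1 = ?L + ((c p + 1) * ln \<xi> + c p) + - ?B"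
    by (simp add: \<kappa>_def c_eq algebra_simps)
  then have "exp (\<kappa> * ?L + ln \<xi> - 1) / (2 * (\<Phi> * \<alpha> * ?L + 2))
      = exp ?L / 2 * (exp ((c p + 1) * ln \<xi> + c p) / (c p + 2) * exp (- ?B))"
    by (simp only: exp_add c_eq) (simp add: field_simps)
  also have "\<dots> \<le> real (p - k p) * (\<xi> ^ r p * exp (real (r p)) / (real (r p) + 1)
      * exp (- real (hi p) * q p / (1 - q p)))"
    using A B P xi_pos \<open>0 \<le> c p\<close> by (intro mult_mono) auto
  also have "\<dots> \<le> real (p - k p) * hit_prob p"
    unfolding hit_prob_def using elim(3,4) xi_pos by (intro mult_left_mono binomial_term_ge) auto
  finally show ?case .
qed

lemma tendsto_exp_neg_hit_prob:
  assumes "0 < \<kappa>"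
  shows "((\<lambda>p. exp (- real (p - k p) * hit_prob p)) \<longlongrightarrow> 0) at_top"
proof -
  let ?G = "\<lambda>p::nat. exp (\<kappa> * ln (real p) + ln \<xi> - 1) / (2 * (\<Phi> * \<alpha> * ln (real p) + 2))"
  have "filterlim ?G at_top at_top"
    using assms Phi_pos alpha_pos by real_asymp
  then have lim: "((\<lambda>p. exp (- ?G p)) \<longlongrightarrow> 0) at_top"
    by (rule tendsto_exp_neg_at_top)
  have le: "\<forall>\<^sub>F p in at_top. exp (- real (p - k p) * hit_prob p) \<le> exp (- ?G p)"
    using eventually_hit_prob_ge by eventually_elim simp
  have nonneg: "\<forall>\<^sub>F p in at_top. 0 \<le> exp (- real (p - k p) * hit_prob p)"
    by simp
  show ?thesis
    by (rule tendsto_sandwich[OF nonneg le tendsto_const lim])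
qed

lemma filterlim_n: "filterlim (\<lambda>p. real (n p)) at_top at_top"
  unfolding filterlim_at_top
proof
  fix B :: real
  show "\<forall>\<^sub>F p in at_top. B \<le> real (n p)"
    using eventually_k_ge[of "B / \<gamma>"] eventually_ln_ge[of 1]
  proof eventually_elim
    case (elim p)
    have "B \<le> \<gamma> * real (k p)"
      using elim(1) gamma_pos by (simp add: divide_le_eq mult.commute)
    also have "\<dots> \<le> \<gamma> * real (k p) * ln (real p)"
      using mult_left_mono[OF elim(2), of "\<gamma> * real (k p)"] gamma_pos by simp
    also have "\<dots> \<le> real (n p)"
      using elim(2) by (intro n_bounds(1)) simp
    finally show ?case .
  qed
qed

lemma tendsto_exp_neg_if_ge_n:
  assumes "0 < C" "\<forall>\<^sub>F p in at_top. C * real (n p) \<le> g p"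
  shows "((\<lambda>p. exp (- g p)) \<longlongrightarrow> 0) at_top"
proof -
  have "filterlim (\<lambda>p. C * real (n p)) at_top at_top"
    using assms(1) by (intro filterlim_tendsto_pos_mult_at_top[OF tendsto_const _ filterlim_n])
  then show ?thesis
    by (intro tendsto_exp_neg_at_top filterlim_at_top_mono[OF _ assms(2)])
qed

lemma tendsto_deviation_bounds:
  "((\<lambda>p. 2 * exp (- 2 * real (n p) * (\<pi> p)\<^sup>2 * \<delta>\<^sup>2)) \<longlongrightarrow> 0) at_top"
  "((\<lambda>p. exp (- 2 * mid p * \<rho>\<^sup>2 * \<delta>\<^sup>2)) \<longlongrightarrow> 0) at_top"
proof -
  let ?a = "exp (- \<nu>) * (1 - \<delta>)"
  have "0 < ?a"
    using delta_le_half by simp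
  have "((\<lambda>p. exp (- (2 * real (n p) * (\<pi> p)\<^sup>2 * \<delta>\<^sup>2))) \<longlongrightarrow> 0) at_top"
  proof (rule tendsto_exp_neg_if_ge_n)
    show "0 < 2 * ?a\<^sup>2 * \<delta>\<^sup>2"
      using \<open>0 < ?a\<close> delta_pos delta_le_half by (intro mult_pos_pos) simp_all
    show "\<forall>\<^sub>F p in at_top. 2 * ?a\<^sup>2 * \<delta>\<^sup>2 * real (n p) \<le> 2 * real (n p) * (\<pi> p)\<^sup>2 * \<delta>\<^sup>2"
      using eventually_pi_bounds
    proof eventually_elim
      case (elim p)
      then have "?a\<^sup>2 \<le> (\<pi> p)\<^sup>2"
        using \<open>0 < ?a\<close> by (intro power_mono) auto
      then show ?case
        by (simp add: mult_left_mono mult_right_mono mult_ac)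
    qed
  qed
  then show "((\<lambda>p. 2 * exp (- 2 * real (n p) * (\<pi> p)\<^sup>2 * \<delta>\<^sup>2)) \<longlongrightarrow> 0) at_top"
    using tendsto_mult_right_zero[of _ at_top 2] by simp
  have "((\<lambda>p. exp (- (2 * mid p * \<rho>\<^sup>2 * \<delta>\<^sup>2))) \<longlongrightarrow> 0) at_top"
  proof (rule tendsto_exp_neg_if_ge_n)
    show "0 < 2 * ?a * (1 - \<delta>) * \<rho>\<^sup>2 * \<delta>\<^sup>2"
      using \<open>0 < ?a\<close> delta_pos delta_le_half rho_pos by (intro mult_pos_pos) simp_all
    show "\<forall>\<^sub>F p in at_top. 2 * ?a * (1 - \<delta>) * \<rho>\<^sup>2 * \<delta>\<^sup>2 * real (n p) \<le> 2 * mid p * \<rho>\<^sup>2 * \<delta>\<^sup>2"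
      using eventually_pi_bounds
    proof eventually_elim
      case (elim p)
      then have "?a * real (n p) * (1 - \<delta>) \<le> \<pi> p * real (n p) * (1 - \<delta>)"
        using delta_le_half by (intro mult_right_mono) auto
      then have "?a * (1 - \<delta>) * real (n p) \<le> mid p"
        by (simp add: mid_def mult_ac)
      then show ?case
        using rho_pos delta_pos by (simp add: mult_right_mono mult_ac)
    qed
  qed
  then show "((\<lambda>p. exp (- 2 * mid p * \<rho>\<^sup>2 * \<delta>\<^sup>2)) \<longlongrightarrow> 0) at_top"
    by simp
qed

lemma eventually_intruder_prob_ge:
  "\<forall>\<^sub>F p in at_top. 1 - exp (- real (p - k p) * hit_prob p) - exp (- 2 * mid p * \<rho>\<^sup>2 * \<delta>\<^sup>2)
       - 2 * exp (- 2 * real (n p) * (\<pi> p)\<^sup>2 * \<delta>\<^sup>2)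
     \<le> measure_pmf.prob (gt_pmf p (k p) (n p) \<nu> \<rho>) (intruder_event p (n p) (c p))"
  using eventually_ln_ge[of 0] eventually_k_le_half eventually_k_ge[of \<nu>] eventually_pi_bounds
    filterlim_n[unfolded filterlim_at_top, rule_format, of 1]
proof eventually_elim
  case (elim p)
  have "0 < exp (- \<nu>) * (1 - \<delta>)" "exp (- \<nu>) \<le> 1"
    using delta_le_half nu_pos by simp_all
  then have "0 < \<pi> p" "\<pi> p \<le> 1"
    using elim(4) by linarith+
  then have "0 < mid p"
    using elim(5) delta_le_half by (simp add: mid_def)
  have "1 - exp (- real (p - k p) * hit_prob p) - exp (- 2 * mid p * \<rho>\<^sup>2 * \<delta>\<^sup>2)
      - measure_pmf.prob (binomial_pmf (n p) (\<pi> p)) {x. hi p < x \<or> real x < mid p}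
      \<le> measure_pmf.prob (gt_pmf p (k p) (n p) \<nu> \<rho>) (intruder_event p (n p) (c p))"
    unfolding hit_prob_def \<pi>_def q_def
  proof (rule measure_gt_pmf_intruder_ge)
    fix m assume "mid p \<le> real m"
    then show "measure_pmf.prob (binomial_pmf m \<rho>) {x. x < lo p} \<le> exp (- 2 * mid p * \<rho>\<^sup>2 * \<delta>\<^sup>2)"
      unfolding lo_def using rho_pos rho_less_1 delta_pos delta_le_half \<open>0 < mid p\<close>
      by (intro binomial_lower_deviation) auto
  qed (use elim(2,3) nu_pos rho_pos rho_less_1 r_bounds(1)[OF elim(1)] in auto)
  moreover have "measure_pmf.prob (binomial_pmf (n p) (\<pi> p)) {x. hi p < x \<or> real x < mid p}
      \<le> 2 * exp (- 2 * real (n p) * (\<pi> p)\<^sup>2 * \<delta>\<^sup>2)"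
    unfolding hi_def mid_def using \<open>0 < \<pi> p\<close> \<open>\<pi> p \<le> 1\<close> elim(5) delta_pos
    by (intro binomial_two_sided_deviation) auto
  ultimately show ?case
    by linarith
qed

lemma intruder_prob_tendsto_1:
  assumes "0 < \<kappa>"
  shows "((\<lambda>p. measure_pmf.prob (gt_pmf p (k p) (n p) \<nu> \<rho>) (intruder_event p (n p) (c p))) \<longlongrightarrow> 1) at_top"
proof (rule tendsto_sandwich[OF eventually_intruder_prob_ge _ _ tendsto_const])
  show "\<forall>\<^sub>F p in at_top. measure_pmf.prob (gt_pmf p (k p) (n p) \<nu> \<rho>) (intruder_event p (n p) (c p)) \<le> 1"
    by simp
  show "((\<lambda>p. 1 - exp (- real (p - k p) * hit_prob p) - exp (- 2 * mid p * \<rho>\<^sup>2 * \<delta>\<^sup>2)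
      - 2 * exp (- 2 * real (n p) * (\<pi> p)\<^sup>2 * \<delta>\<^sup>2)) \<longlongrightarrow> 1) at_top"
    using tendsto_diff[OF tendsto_diff[OF tendsto_diff[OF tendsto_const tendsto_exp_neg_hit_prob[OF assms]]
        tendsto_deviation_bounds(2)] tendsto_deviation_bounds(1)]
    by simp
qed

end


lemma smallo_of_bigtheta_powr:
  assumes "0 < \<theta>" "\<theta> < 1" "(\<lambda>p. real (k p)) \<in> \<Theta>(\<lambda>p. real p powr \<theta>)"
  shows "(\<lambda>p. ln (real p)) \<in> o(\<lambda>p. real (k p))" "(\<lambda>p. real (k p)) \<in> o(\<lambda>p. real p)"
proof -
  have "(\<lambda>p. real p powr \<theta>) \<in> O(\<lambda>p. real (k p))"
    using assms(3) by (simp add: bigtheta_sym bigthetaD1)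
  then show "(\<lambda>p. ln (real p)) \<in> o(\<lambda>p. real (k p))"
    by (rule landau_o.small_big_trans[rotated]) (use assms(1) in real_asymp)
  show "(\<lambda>p. real (k p)) \<in> o(\<lambda>p. real p)"
    by (rule landau_o.big_small_trans[OF bigthetaD1[OF assms(3)]]) (use assms(2) in real_asymp)
qed

lemma obtain_delta_rate_pos:
  fixes \<rho> \<Phi> \<alpha> :: real
  assumes "0 < \<rho>" "0 < \<Phi>" "0 < 1 + \<Phi> * \<alpha> * ln (\<rho> / \<Phi>) + \<Phi> * \<alpha> - \<alpha>"
  obtains \<delta> where "0 < \<delta>" "\<delta> < 1 / 2"
    "0 < 1 + \<Phi> * \<alpha> * ln (\<rho> * (1 - \<delta>) ^ 4 / \<Phi>) + \<Phi> * \<alpha> - (1 + \<delta>)\<^sup>2 * \<alpha>"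
proof -
  have "((\<lambda>\<delta>. 1 + \<Phi> * \<alpha> * ln (\<rho> * (1 - \<delta>) ^ 4 / \<Phi>) + \<Phi> * \<alpha> - (1 + \<delta>)\<^sup>2 * \<alpha>)
      \<longlongrightarrow> 1 + \<Phi> * \<alpha> * ln (\<rho> * (1 - 0) ^ 4 / \<Phi>) + \<Phi> * \<alpha> - (1 + 0)\<^sup>2 * \<alpha>) (at_right 0)"
    using assms(1,2) by (intro tendsto_intros) auto
  moreover have "0 < 1 + \<Phi> * \<alpha> * ln (\<rho> * (1 - 0) ^ 4 / \<Phi>) + \<Phi> * \<alpha> - (1 + 0)\<^sup>2 * \<alpha>"
    using assms(3) by simp
  ultimately have "\<forall>\<^sub>F \<delta> in at_right 0. 0 < 1 + \<Phi> * \<alpha> * ln (\<rho> * (1 - \<delta>) ^ 4 / \<Phi>) + \<Phi> * \<alpha> - (1 + \<delta>)\<^sup>2 * \<alpha>"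
    by (rule order_tendstoD(1))
  moreover have "\<forall>\<^sub>F \<delta> in at_right (0::real). \<delta> < 1 / 2"
    by (rule order_tendstoD(2)[OF tendsto_ident_at]) simp
  ultimately have "\<forall>\<^sub>F \<delta> in at_right 0. 0 < \<delta> \<and> \<delta> < 1 / 2 \<and>
      0 < 1 + \<Phi> * \<alpha> * ln (\<rho> * (1 - \<delta>) ^ 4 / \<Phi>) + \<Phi> * \<alpha> - (1 + \<delta>)\<^sup>2 * \<alpha>"
    using eventually_at_right_less by eventually_elim auto
  then show ?thesis
    using that eventually_happens'[OF trivial_limit_at_right_real] by blast
qed

theorem lemma3:
  fixes \<theta> \<nu> \<rho> \<gamma> \<Phi> :: real and k :: "nat \<Rightarrow> nat"
  assumes "0 < \<theta>" "\<theta> < 1" "0 < \<nu>" "0 < \<rho>" "\<rho> < 1" "0 < \<gamma>" "\<rho> < \<Phi>"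
    and "(\<lambda>p. real (k p)) \<in> \<Theta>(\<lambda>p. real p powr \<theta>)"
    and "\<gamma> * \<nu> * exp (- \<nu>) * (Dfun \<rho> \<Phi> + 1 - \<rho>) < 1"
  shows "((\<lambda>p. let n = nat \<lceil>\<gamma> * real (k p) * ln (real p)\<rceil>;
                  c = \<Phi> * \<nu> * exp (- \<nu>) * \<gamma> * ln (real p) in
           measure_pmf.prob (gt_pmf p (k p) n \<nu> \<rho>)
             {(S, X, Y). \<exists>j. intruding_possible_defective p n S X Y j \<and> real (N_fp n S X Y j) > c})
         \<longlongrightarrow> 1) at_top"
proof -
  let ?\<alpha> = "\<gamma> * \<nu> * exp (- \<nu>)"
  have "0 < \<Phi>"
    using assms(4,7) by linarith
  \<comment> \<open>since \<open>Dfun \<rho> \<Phi> + 1 - \<rho> = \<Phi> * ln (\<Phi> / \<rho>) - \<Phi> + 1\<close>\<close>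
  then have "0 < 1 + \<Phi> * ?\<alpha> * ln (\<rho> / \<Phi>) + \<Phi> * ?\<alpha> - ?\<alpha>"
    using assms(4,9) by (simp add: Dfun_def ln_div algebra_simps)
  then obtain \<delta> where "0 < \<delta>" "\<delta> < 1 / 2"
    and rate: "0 < 1 + \<Phi> * ?\<alpha> * ln (\<rho> * (1 - \<delta>) ^ 4 / \<Phi>) + \<Phi> * ?\<alpha> - (1 + \<delta>)\<^sup>2 * ?\<alpha>"
    using obtain_delta_rate_pos[OF assms(4) \<open>0 < \<Phi>\<close>] by blast
  interpret intruder_asymptotics k \<nu> \<rho> \<gamma> \<Phi> \<delta>
    using assms(3-7) smallo_of_bigtheta_powr[OF assms(1,2,8)] \<open>0 < \<delta>\<close> \<open>\<delta> < 1 / 2\<close>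
    by unfold_locales auto
  have "0 < \<kappa>"
    using rate by (simp add: \<kappa>_def \<xi>_def \<alpha>_def)
  then show ?thesis
    using intruder_prob_tendsto_1 by (simp add: Let_def n_def c_def intruder_event_def)
qed

end
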